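(* Let $q=2^m$ and $\mu_{q+1}=\{\delta\in\mathbb{F}_{q^2}:\delta^{q+1}=1\}$. The map $x\mapsto \dfrac{x^q}{1+x^{1+q}}$ is exactly 2-to-1 on $\mathbb{F}_{q^2}^{*}\setminus\mu_{q+1}$: for $s,t\in\mathbb{F}_{q^2}^{*}\setminus\mu_{q+1}$ one has $\frac{s^q}{1+s^{1+q}}=\frac{t^q}{1+t^{1+q}}$ if and only if $t=s$ or $t=s^{-q}$, and these two values are distinct. *)

theory Defs
  imports Main
begin

definition mu :: "nat \<Rightarrow> 'a::field set" where
  "mu n = {d. d ^ n = 1}"

end

theory Submission
  imports Defs "HOL-Number_Theory.Residues"
begin

text \<open>
  The Frobenius power \<open>\<sigma> x = x\<^sup>q\<close> is an involutive automorphism of \<open>GF(q\<^sup>2)\<close>, and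
  \<open>\<sigma> x / (1 + x \<sigma> x) = 1 / (x + 1/\<sigma> x)\<close>. So the map is \<open>1/g\<close> with \<open>g x = x + 1/\<sigma> x\<close>,
  and \<open>g\<close> is invariant under the involution \<open>x \<mapsto> 1/\<sigma> x\<close>. Conversely, if \<open>g s = g t\<close> with
  \<open>s \<noteq> t\<close>, applying \<open>\<sigma>\<close> to \<open>s - t = (\<sigma> s - \<sigma> t) / (\<sigma> s \<sigma> t)\<close> forces
  \<open>s \<sigma> s \<cdot> t \<sigma> t = 1\<close>, and then \<open>g s = g t\<close> is linear in \<open>t\<close> with the unique solution
  \<open>t = 1/\<sigma> s\<close>. Characteristic 2 is needed only for additivity of \<open>\<sigma>\<close> and to read
  \<open>1 + x \<sigma> x \<noteq> 0\<close> as \<open>x \<notin> \<mu>\<^sub>q\<^sub>+\<^sub>1\<close>.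
\<close>

locale field_involution =
  fixes \<sigma> :: "'a::field \<Rightarrow> 'a"
  assumes add: "\<sigma> (x + y) = \<sigma> x + \<sigma> y"
    and mult: "\<sigma> (x * y) = \<sigma> x * \<sigma> y"
    and involution: "\<sigma> (\<sigma> x) = x"
begin

lemma zero [simp]: "\<sigma> 0 = 0"
proof -
  have "\<sigma> 0 + \<sigma> 0 = \<sigma> 0 + 0"
    using add[of 0 0] by simp
  then show ?thesis
    by (rule add_left_imp_eq)
qed

lemma one [simp]: "\<sigma> 1 = 1"
  using mult[of 1 "\<sigma> 1"] by (simp add: involution)

lemma diff: "\<sigma> (x - y) = \<sigma> x - \<sigma> y"
  using add[of "x - y" y] by simp

lemma eq_0_iff [simp]: "\<sigma> x = 0 \<longleftrightarrow> x = 0"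
  by (metis involution zero)

lemma inverse: "\<sigma> (inverse x) = inverse (\<sigma> x)"
proof (cases "x = 0")
  case False
  then have "\<sigma> x * \<sigma> (inverse x) = 1"
    by (simp flip: mult)
  then show ?thesis
    by (simp add: inverse_unique)
qed simp

lemma divide_one_plus_eq_inverse:
  "\<sigma> x / (1 + x * \<sigma> x) = inverse (x + inverse (\<sigma> x))"
proof (cases "x = 0")
  case False
  then show ?thesis
    by (simp add: field_simps)
qed simp

lemma plus_inverse_eq_imp:
  assumes "s \<noteq> 0" "t \<noteq> 0" "1 + s * \<sigma> s \<noteq> 0"
    and eq: "s + inverse (\<sigma> s) = t + inverse (\<sigma> t)"
  shows "t = s \<or> t = inverse (\<sigma> s)"
proof (cases "t = s")
  case False
  have \<sigma>0: "\<sigma> s \<noteq> 0" "\<sigma> t \<noteq> 0"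
    using assms(1,2) by simp_all
  have st: "s - t = (\<sigma> s - \<sigma> t) / (\<sigma> s * \<sigma> t)"
    using eq \<sigma>0 by (simp add: field_simps)
  have "\<sigma> s - \<sigma> t = (s - t) / (s * t)"
    using arg_cong[OF st, of \<sigma>] by (simp add: diff mult inverse involution divide_inverse)
  with st have "s - t = (s - t) / (s * \<sigma> s * (t * \<sigma> t))"
    using \<sigma>0 by (simp add: field_simps)
  with False have "s * \<sigma> s * (t * \<sigma> t) = 1"
    by (simp add: eq_divide_eq split: if_splits)
  then have "inverse (\<sigma> t) = t * (s * \<sigma> s)"
    using \<sigma>0 by (simp add: field_simps)
  then have "t * (1 + s * \<sigma> s) = t + inverse (\<sigma> t)"
    by (simp add: algebra_simps)
  also have "\<dots> = s + inverse (\<sigma> s)"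
    by (simp add: eq)
  also have "\<dots> = inverse (\<sigma> s) * (1 + s * \<sigma> s)"
    using \<sigma>0 by (simp add: field_simps)
  finally have "t * (1 + s * \<sigma> s) = inverse (\<sigma> s) * (1 + s * \<sigma> s)" .
  then show ?thesis
    using assms(3) by simp
qed simp

lemma plus_inverse_eq_iff:
  assumes "s \<noteq> 0" "t \<noteq> 0" "1 + s * \<sigma> s \<noteq> 0"
  shows "s + inverse (\<sigma> s) = t + inverse (\<sigma> t) \<longleftrightarrow> t = s \<or> t = inverse (\<sigma> s)"
  using plus_inverse_eq_imp[OF assms]
  by (auto simp: inverse involution)

lemma divide_one_plus_eq_iff:
  assumes "s \<noteq> 0" "t \<noteq> 0" "1 + s * \<sigma> s \<noteq> 0"
  shows "\<sigma> s / (1 + s * \<sigma> s) = \<sigma> t / (1 + t * \<sigma> t) \<longleftrightarrow> t = s \<or> t = inverse (\<sigma> s)"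
  by (simp add: divide_one_plus_eq_inverse plus_inverse_eq_iff[OF assms])

lemma neq_inverse_conj:
  assumes "s \<noteq> 0" "s * \<sigma> s \<noteq> 1"
  shows "s \<noteq> inverse (\<sigma> s)"
proof
  assume "s = inverse (\<sigma> s)"
  then have "s * \<sigma> s = 1"
    using assms(1) by (metis eq_0_iff left_inverse)
  with assms(2) show False ..
qed

end

text \<open>The library's \<open>finite_field_power_card_eq_same\<close> needs the sort \<open>finite_field\<close>.\<close>

lemma power_card_UNIV_eq_self:
  fixes x :: "'a::{field,finite}"
  shows "x ^ card (UNIV :: 'a set) = x"
proof (cases "x = 0")
  case False
  have "x * (\<Prod>y\<in>UNIV-{0}. x * y) = x ^ card (UNIV :: 'a set) * \<Prod>(UNIV-{0})"
    using finite_UNIV_card_ge_0[where 'a='a]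
    by (simp add: prod.distrib mult_ac power_Suc[symmetric])
  also have "(\<Prod>y\<in>UNIV-{0}. x * y) = \<Prod>(UNIV-{0})"
    by (rule prod.reindex_bij_witness[of _ "\<lambda>y. y / x" "\<lambda>y. x * y"]) (use False in auto)
  finally show ?thesis
    by simp
qed (use finite_UNIV_card_ge_0[where 'a='a] in auto)

lemma CHAR_eq_if_card_eq_prime_power:
  assumes "prime p" and "card (UNIV :: 'a::{field,finite} set) = p ^ n"
  shows "CHAR('a) = p"
proof -
  have "prime CHAR('a)"
    by (rule prime_CHAR_semidom) (simp add: finite_imp_CHAR_pos)
  moreover have "CHAR('a) dvd p ^ n"
    using CHAR_dvd_CARD assms(2) by metis
  ultimately show ?thesis
    using assms(1) prime_dvd_power primes_dvd_imp_eq by blast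
qed

lemma one_plus_eq_0_iff_CHAR_2:
  assumes "CHAR('a::ring_1) = 2"
  shows "1 + (x :: 'a) = 0 \<longleftrightarrow> x = 1"
  using uminus_CHAR_2[OF assms, of 1] by (auto simp: add_eq_0_iff)

lemma field_involution_Frobenius_power:
  fixes q :: nat
  assumes card: "card (UNIV :: 'a::{field,finite} set) = q ^ 2" and q: "q = CHAR('a) ^ k"
  shows "field_involution (\<lambda>x :: 'a. x ^ q)"
proof
  have "prime CHAR('a)"
    by (rule prime_CHAR_semidom) (simp add: finite_imp_CHAR_pos)
  then show "(x + y) ^ q = x ^ q + y ^ q" for x y :: 'a
    using freshmans_dream' q by blast
  show "(x * y) ^ q = x ^ q * y ^ q" for x y :: 'a
    by (rule power_mult_distrib)
  show "(x ^ q) ^ q = x" for x :: 'a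
    using power_card_UNIV_eq_self[of x] card by (simp add: power2_eq_square power_mult)
qed

theorem mainTheorem7:
  fixes m :: nat and q :: nat and s t :: "'a::{field,finite}"
  assumes "q = 2 ^ m"
    and "card (UNIV :: 'a set) = q ^ 2"
    and "s \<noteq> 0" and "s \<notin> mu (q + 1)"
    and "t \<noteq> 0" and "t \<notin> mu (q + 1)"
  shows "(s ^ q / (1 + s ^ (1 + q)) = t ^ q / (1 + t ^ (1 + q))
           \<longleftrightarrow> (t = s \<or> t = inverse (s ^ q)))
         \<and> s \<noteq> inverse (s ^ q)"
proof -
  have char: "CHAR('a) = 2"
    using CHAR_eq_if_card_eq_prime_power[of 2 "m * 2"] assms(1,2) by (simp add: power_mult)
  interpret field_involution "\<lambda>x :: 'a. x ^ q"
    using field_involution_Frobenius_power[where 'a='a, of q m] assms(1,2) char by simp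
  have "s * s ^ q \<noteq> 1"
    using assms(4) by (simp add: mu_def)
  moreover from this have "1 + s * s ^ q \<noteq> 0"
    using char by (simp add: one_plus_eq_0_iff_CHAR_2)
  ultimately show ?thesis
    using divide_one_plus_eq_iff[of s t] neq_inverse_conj[of s] assms(3,5) by simp
qed

end
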